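(* Let $n\in\mathbb N$ and let $f$ be extremal for $M_n$ with $f(0)>0$ and $N$ atoms. Let $t=-\log f(0)>0$ and let $h:\mathbb D\to\mathbb D$ be the holomorphic function with $h(0)=0$ such that $f=\exp\big(t\frac{h-1}{h+1}\big)$. Then $h$ is a finite Blaschke product of degree $N$.
   Context: $\mathbb D$ is the open unit disc; $\mathcal B_0=\{f$ holomorphic on $\mathbb D: 0<|f|\le1\}$; $M_n(f)=\mathrm{Re}\,a_n$ for $f=\sum a_jz^j$; $f\in\mathcal B_0$ is extremal for $M_n$ if $M_n(f)\ge M_n(F)$ for all $F\in\mathcal B_0$. It is known that such $f$ with $f(0)>0$ has the form $f(z)=\exp\big(-\sum_{j=1}^N\lambda_j\frac{1+\alpha_jz}{1-\alpha_jz}\big)$ with $1\le N\le n$, $\lambda_j>0$, distinct $\alpha_j\in\partial\mathbb D$ ($N$ = number of atoms). Explicitly $h=\frac{t+\log f}{t-\log f}$ with $\log f$ the branch real at $0$. *)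

theory Defs
  imports "HOL-Analysis.Analysis"
begin

definition B0 :: "(complex \<Rightarrow> complex) set" where
  "B0 = {f. f holomorphic_on ball 0 1 \<and> (\<forall>z\<in>ball 0 1. 0 < norm (f z) \<and> norm (f z) \<le> 1)}"

definition Mfun :: "nat \<Rightarrow> (complex \<Rightarrow> complex) \<Rightarrow> real" where
  "Mfun n f = Re ((deriv ^^ n) f 0 / of_nat (fact n))"

definition extremal :: "nat \<Rightarrow> (complex \<Rightarrow> complex) \<Rightarrow> bool" where
  "extremal n f \<longleftrightarrow> f \<in> B0 \<and> (\<forall>F\<in>B0. Mfun n F \<le> Mfun n f)"

definition has_atoms :: "(complex \<Rightarrow> complex) \<Rightarrow> nat \<Rightarrow> bool" where
  "has_atoms f N \<longleftrightarrow> (\<exists>(lam :: nat \<Rightarrow> real) (alpha :: nat \<Rightarrow> complex).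
     (\<forall>j<N. lam j > 0 \<and> norm (alpha j) = 1) \<and> inj_on alpha {..<N} \<and>
     (\<forall>z\<in>ball 0 1. f z = exp (- (\<Sum>j<N. of_real (lam j) * (1 + alpha j * z) / (1 - alpha j * z)))))"

definition finite_blaschke :: "(complex \<Rightarrow> complex) \<Rightarrow> nat \<Rightarrow> bool" where
  "finite_blaschke h N \<longleftrightarrow> (\<exists>(c :: complex) (a :: nat \<Rightarrow> complex).
     norm c = 1 \<and> (\<forall>k<N. a k \<in> ball 0 1) \<and>
     (\<forall>z\<in>ball 0 1. h z = c * (\<Prod>k<N. (z - a k) / (1 - cnj (a k) * z))))"

definition h_rep :: "(complex \<Rightarrow> complex) \<Rightarrow> real \<Rightarrow> (complex \<Rightarrow> complex) \<Rightarrow> bool" where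
  "h_rep f t h \<longleftrightarrow> h holomorphic_on ball 0 1 \<and> h ` ball 0 1 \<subseteq> ball 0 1 \<and> h 0 = 0 \<and>
     (\<forall>z\<in>ball 0 1. f z = exp (of_real t * (h z - 1) / (h z + 1)))"

end

theory Submission
  imports Defs "HOL-Computational_Algebra.Fundamental_Theorem_Algebra"
begin

(*
  With atoms alpha_j and masses lambda_j we have f = exp(-S) for the Herglotz transform
  S(z) = sum_j lambda_j (1 + alpha_j z)/(1 - alpha_j z), so t = S(0) = sum_j lambda_j and
  h = (t - S)/(t + S); this h is the only one, since two continuous logarithms of f on the disc
  that agree at 0 agree everywhere. Writing S = P/Q with Q = prod_j (1 - alpha_j z) gives
  h = p/q with p = tQ - P and q = tQ + P, and the top coefficients of Q and P cancel in q but
  not in p, so p has degree N. Since Re S > 0 inside the disc and Re S <= 0 outside, all zeros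
  of p lie in the disc; and the symmetry conj S(1/conj z) = -S(z) identifies q, up to a
  unimodular factor, with the reflected polynomial z^N conj p(1/conj z).
*)

lemma Re_cayley: "Re ((1 + w) / (1 - w)) = (1 - (cmod w)^2) / (cmod (1 - w))^2"
proof -
  have "(cmod w)^2 = (Re w)^2 + (Im w)^2" "(cmod (1 - w))^2 = (1 - Re w)^2 + (Im w)^2"
    by (simp_all add: cmod_power2)
  then show ?thesis by (simp add: Re_divide power2_eq_square algebra_simps)
qed

lemma cnj_cayley_reflect:
  assumes "norm a = 1" "z \<noteq> 0"
  shows "cnj ((1 + a * (1 / cnj z)) / (1 - a * (1 / cnj z))) = - ((1 + a * z) / (1 - a * z))"
proof -
  have a: "a * cnj a = 1"
    using assms(1) by (metis complex_norm_square of_real_1 power_one)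
  define u where "u = a * z"
  have u: "u \<noteq> 0" using assms unfolding u_def by auto
  have "cnj ((1 + a * (1 / cnj z)) / (1 - a * (1 / cnj z))) = (1 + cnj a / z) / (1 - cnj a / z)"
    by (simp add: divide_inverse)
  also have "cnj a / z = 1 / u"
  proof -
    have "cnj a = 1 / a" using a by (simp add: eq_divide_eq mult.commute)
    then show ?thesis using assms(2) unfolding u_def by simp
  qed
  also have "(1 + 1 / u) / (1 - 1 / u) = - ((1 + u) / (1 - u))"
  proof (cases "u = 1")
    case False
    then have "1 - u \<noteq> 0" "u - 1 \<noteq> 0" by auto
    with u show ?thesis by (simp add: field_simps)
  qed simp
  finally show ?thesis unfolding u_def .
qed

lemma norm_diff_less_norm_add:
  assumes "0 < t" "0 < Re s"
  shows "norm (complex_of_real t - s) < norm (complex_of_real t + s)"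
proof -
  have "(norm (complex_of_real t - s))^2 = (t - Re s)^2 + (Im s)^2" by (simp add: cmod_power2)
  also have "\<dots> < (t + Re s)^2 + (Im s)^2" using assms by (simp add: power2_eq_square algebra_simps)
  also have "\<dots> = (norm (complex_of_real t + s))^2" by (simp add: cmod_power2)
  finally show ?thesis by (rule power_less_imp_less_base) simp
qed

lemma cayley_inverse:
  fixes t s :: complex
  assumes "t \<noteq> 0" "t + s \<noteq> 0"
  shows "t * ((t - s) / (t + s) - 1) / ((t - s) / (t + s) + 1) = - s"
proof -
  have "(t - s) / (t + s) - 1 = - 2 * s / (t + s)" "(t - s) / (t + s) + 1 = 2 * t / (t + s)"
    using assms(2) by (simp_all add: field_simps)
  then show ?thesis using assms by simp
qed

lemma cayley_inj:
  fixes t v w :: complex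
  assumes "t \<noteq> 0" "v + 1 \<noteq> 0" "w + 1 \<noteq> 0"
    and "t * (v - 1) / (v + 1) = t * (w - 1) / (w + 1)"
  shows "v = w"
proof -
  have "(v - 1) * (w + 1) = (w - 1) * (v + 1)"
    using assms by (simp add: field_simps)
  then show ?thesis by (simp add: algebra_simps)
qed

lemma continuous_logs_unique:
  fixes g1 g2 :: "'a::topological_space \<Rightarrow> complex"
  assumes "connected S" "continuous_on S g1" "continuous_on S g2"
    and "\<And>z. z \<in> S \<Longrightarrow> exp (g1 z) = exp (g2 z)" and "a \<in> S" "g1 a = g2 a" "z \<in> S"
  shows "g1 z = g2 z"
proof -
  define k where "k z = (g1 z - g2 z) / (2 * of_real pi * \<i>)" for z
  have k_int: "k z \<in> \<int>" if z: "z \<in> S" for z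
  proof -
    obtain m :: int where "g1 z = g2 z + of_int (2 * m) * pi * \<i>"
      using assms(4)[OF z] unfolding exp_eq by blast
    then have "k z = of_int m" unfolding k_def by (simp add: field_simps)
    then show ?thesis by simp
  qed
  have "k constant_on S"
  proof (rule continuous_discrete_range_constant[OF assms(1)])
    show "continuous_on S k"
      unfolding k_def[abs_def] using assms(2,3) by (intro continuous_intros) auto
    show "\<exists>e>0. \<forall>y. y \<in> S \<and> k y \<noteq> k x \<longrightarrow> e \<le> norm (k y - k x)" if x: "x \<in> S" for x
    proof (intro exI[of _ 1] allI impI conjI)
      fix y assume "y \<in> S \<and> k y \<noteq> k x"
      then obtain m :: int where "k y - k x = of_int m" "m \<noteq> 0"
        using k_int x by (metis Ints_diff Ints_cases of_int_0 right_minus_eq)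
      then show "1 \<le> norm (k y - k x)" by simp
    qed simp
  qed
  then have "k z = k a" using assms(5,7) unfolding constant_on_def by metis
  then show ?thesis using assms(6) unfolding k_def by simp
qed

lemma reflect_linear_factors:
  assumes "z \<noteq> 0"
  shows "z ^ n * cnj (\<Prod>k<n. 1 / cnj z - a k) = (\<Prod>k<n. 1 - cnj (a k) * z)"
proof -
  have "z ^ n * cnj (\<Prod>k<n. 1 / cnj z - a k) = (\<Prod>k<n. z * cnj (1 / cnj z - a k))"
    by (simp add: cnj_prod prod.distrib)
  also have "\<dots> = (\<Prod>k<n. 1 - cnj (a k) * z)"
    using assms by (intro prod.cong refl) (simp add: field_simps)
  finally show ?thesis .
qed

lemma h_rep_unique:
  assumes "h_rep f t h1" "h_rep f t h2" "t \<noteq> 0" "z \<in> ball 0 1"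
  shows "h1 z = h2 z"
proof -
  define cayley where "cayley w = complex_of_real t * (w - 1) / (w + 1)" for w
  have plus_one: "h z + 1 \<noteq> 0" if "h_rep f t h" "z \<in> ball 0 1" for h z
  proof
    assume "h z + 1 = 0"
    then have "norm (h z) = 1" by (metis add_eq_0_iff norm_minus_cancel norm_one)
    with that show False unfolding h_rep_def by force
  qed
  have cont: "continuous_on (ball 0 1) (\<lambda>z. cayley (h z))" if "h_rep f t h" for h
    using that plus_one[OF that] unfolding h_rep_def cayley_def
    by (intro continuous_intros holomorphic_on_imp_continuous_on) auto
  have "cayley (h1 z) = cayley (h2 z)"
  proof (rule continuous_logs_unique[OF _ cont[OF assms(1)] cont[OF assms(2)] _ _ _ assms(4)])
    show "exp (cayley (h1 w)) = exp (cayley (h2 w))" if "w \<in> ball 0 1" for w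
      using assms(1,2) that unfolding h_rep_def cayley_def by metis
    show "cayley (h1 0) = cayley (h2 0)"
      using assms(1,2) unfolding h_rep_def by simp
  qed auto
  then show ?thesis
    using cayley_inj assms plus_one unfolding cayley_def by (metis of_real_eq_0_iff)
qed

lemma finite_blaschke_cong:
  assumes "finite_blaschke h N" "\<And>z. z \<in> ball 0 1 \<Longrightarrow> g z = h z"
  shows "finite_blaschke g N"
  using assms unfolding finite_blaschke_def by simp

locale finite_atoms =
  fixes N :: nat and lam :: "nat \<Rightarrow> real" and alpha :: "nat \<Rightarrow> complex"
  assumes lam_pos: "\<And>j. j < N \<Longrightarrow> 0 < lam j"
    and norm_alpha: "\<And>j. j < N \<Longrightarrow> norm (alpha j) = 1"
    and inj_alpha: "inj_on alpha {..<N}"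
    and N_pos: "0 < N"
begin

definition mass :: real where
  "mass = (\<Sum>j<N. lam j)"

definition herglotz :: "complex \<Rightarrow> complex" where
  "herglotz z = (\<Sum>j<N. of_real (lam j) * (1 + alpha j * z) / (1 - alpha j * z))"

definition cayley_herglotz :: "complex \<Rightarrow> complex" where
  "cayley_herglotz z = (of_real mass - herglotz z) / (of_real mass + herglotz z)"

definition pole_poly :: "complex poly" where
  "pole_poly = (\<Prod>i<N. [:1, - alpha i:])"

definition cofactor_poly :: "nat \<Rightarrow> complex poly" where
  "cofactor_poly j = (\<Prod>i\<in>{..<N} - {j}. [:1, - alpha i:])"

definition herglotz_numer :: "complex poly" where
  "herglotz_numer = (\<Sum>j<N. smult (of_real (lam j)) ([:1, alpha j:] * cofactor_poly j))"

definition blaschke_numer :: "complex poly" where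
  "blaschke_numer = smult (of_real mass) pole_poly - herglotz_numer"

lemma alpha_nonzero: "j < N \<Longrightarrow> alpha j \<noteq> 0"
  using norm_alpha[of j] by auto

lemma alpha_mult_cnj: "j < N \<Longrightarrow> alpha j * cnj (alpha j) = 1"
  using norm_alpha[of j] by (metis complex_norm_square of_real_1 power_one)

lemma mass_pos: "0 < mass"
  unfolding mass_def using N_pos lam_pos by (intro sum_pos) auto

lemma herglotz_0 [simp]: "herglotz 0 = of_real mass"
  by (simp add: herglotz_def mass_def)

lemma herglotz_holomorphic: "herglotz holomorphic_on ball 0 1"
proof -
  have "1 - alpha j * z \<noteq> 0" if "j < N" "z \<in> ball 0 1" for j z
  proof
    assume "1 - alpha j * z = 0"
    then have "norm (alpha j * z) = 1" by simp
    with that show False by (simp add: norm_mult norm_alpha)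
  qed
  then show ?thesis
    unfolding herglotz_def[abs_def] by (intro holomorphic_intros) auto
qed

lemma Re_herglotz:
  "Re (herglotz z) = (1 - (norm z)^2) * (\<Sum>j<N. lam j / (cmod (1 - alpha j * z))^2)"
  unfolding herglotz_def Re_sum sum_distrib_left
proof (intro sum.cong refl)
  fix j assume "j \<in> {..<N}"
  then have "cmod (alpha j * z) = cmod z" by (simp add: norm_mult norm_alpha)
  then show "Re (of_real (lam j) * (1 + alpha j * z) / (1 - alpha j * z)) =
      (1 - (cmod z)^2) * (lam j / (cmod (1 - alpha j * z))^2)"
    by (simp add: times_divide_eq_right[symmetric] Re_cayley del: times_divide_eq_right)
       (simp add: field_simps)
qed

lemma Re_herglotz_pos:
  assumes "norm z < 1"
  shows "0 < Re (herglotz z)"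
proof -
  have "0 < lam j / (cmod (1 - alpha j * z))^2" if "j < N" for j
  proof -
    have "cmod (alpha j * z) < 1" using assms that by (simp add: norm_mult norm_alpha)
    then have "1 - alpha j * z \<noteq> 0" by auto
    then show ?thesis using lam_pos[OF that] by simp
  qed
  then have "0 < (\<Sum>j<N. lam j / (cmod (1 - alpha j * z))^2)"
    using N_pos by (intro sum_pos) auto
  moreover have "0 < 1 - (norm z)^2" using assms by (simp add: power_less_one_iff abs_square_less_1)
  ultimately show ?thesis unfolding Re_herglotz by simp
qed

lemma Re_herglotz_nonpos:
  assumes "1 \<le> norm z"
  shows "Re (herglotz z) \<le> 0"
proof -
  have "0 \<le> (\<Sum>j<N. lam j / (cmod (1 - alpha j * z))^2)"
    using lam_pos by (intro sum_nonneg) (simp add: less_imp_le)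
  moreover have "1 - (norm z)^2 \<le> 0" using assms by (simp add: one_le_power)
  ultimately show ?thesis unfolding Re_herglotz by (simp add: mult_nonpos_nonneg)
qed

lemma cnj_herglotz_reflect:
  assumes "z \<noteq> 0"
  shows "cnj (herglotz (1 / cnj z)) = - herglotz z"
  unfolding herglotz_def cnj_sum sum_negf[symmetric]
proof (intro sum.cong refl)
  fix j assume "j \<in> {..<N}"
  then have "norm (alpha j) = 1" by (simp add: norm_alpha)
  from cnj_cayley_reflect[OF this assms] show
    "cnj (of_real (lam j) * (1 + alpha j * (1 / cnj z)) / (1 - alpha j * (1 / cnj z))) =
     - (of_real (lam j) * (1 + alpha j * z) / (1 - alpha j * z))"
    by (simp add: times_divide_eq_right[symmetric] del: times_divide_eq_right)
qed

lemma pole_poly_split: "j < N \<Longrightarrow> pole_poly = [:1, - alpha j:] * cofactor_poly j"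
  unfolding pole_poly_def cofactor_poly_def by (subst prod.remove[of _ j]) auto

lemma poly_pole_poly: "poly pole_poly z = (\<Prod>i<N. 1 - alpha i * z)"
  by (simp add: pole_poly_def poly_prod algebra_simps)

lemma poly_pole_poly_nonzero:
  assumes "norm z \<noteq> 1"
  shows "poly pole_poly z \<noteq> 0"
proof -
  have "1 - alpha i * z \<noteq> 0" if "i < N" for i
  proof
    assume "1 - alpha i * z = 0"
    then have "norm (alpha i * z) = 1" by simp
    with assms that show False by (simp add: norm_mult norm_alpha)
  qed
  then show ?thesis by (simp add: poly_pole_poly)
qed

lemma herglotz_eq_quotient:
  assumes "poly pole_poly z \<noteq> 0"
  shows "herglotz z = poly herglotz_numer z / poly pole_poly z"
proof -
  have "herglotz z * poly pole_poly z = poly herglotz_numer z"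
    unfolding herglotz_def herglotz_numer_def sum_distrib_right poly_sum
  proof (intro sum.cong refl)
    fix j assume "j \<in> {..<N}"
    then have split: "poly pole_poly z = (1 - alpha j * z) * poly (cofactor_poly j) z"
      by (simp add: pole_poly_split algebra_simps)
    with assms have "1 - alpha j * z \<noteq> 0" by auto
    then have "of_real (lam j) * (1 + alpha j * z) / (1 - alpha j * z) * poly pole_poly z =
        of_real (lam j) * (1 + alpha j * z) * poly (cofactor_poly j) z"
      unfolding split by simp
    then show "of_real (lam j) * (1 + alpha j * z) / (1 - alpha j * z) * poly pole_poly z =
        poly (smult (of_real (lam j)) ([:1, alpha j:] * cofactor_poly j)) z"
      by (simp add: algebra_simps)
  qed
  with assms show ?thesis by (simp add: field_simps)
qed

lemma poly_blaschke_numer: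
  assumes "poly pole_poly z \<noteq> 0"
  shows "poly blaschke_numer z = poly pole_poly z * (of_real mass - herglotz z)"
  using assms by (simp add: blaschke_numer_def herglotz_eq_quotient algebra_simps)

lemma degree_linear_factor: "j < N \<Longrightarrow> degree [:1, - alpha j:] = 1"
  by (simp add: alpha_nonzero)

lemma degree_prod_linear_factors:
  assumes "A \<subseteq> {..<N}"
  shows "degree (\<Prod>i\<in>A. [:1, - alpha i:]) = card A"
proof -
  have "degree (\<Prod>i\<in>A. [:1, - alpha i:]) = (\<Sum>i\<in>A. degree [:1, - alpha i:])"
    by (rule degree_prod_sum_eq) simp
  also have "\<dots> = (\<Sum>i\<in>A. 1)"
    using assms by (intro sum.cong refl degree_linear_factor) auto
  finally show ?thesis by simp
qed

lemma degree_cofactor_poly: "j < N \<Longrightarrow> degree (cofactor_poly j) = N - 1"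
  unfolding cofactor_poly_def by (subst degree_prod_linear_factors) auto

lemma degree_pole_poly: "degree pole_poly = N"
  unfolding pole_poly_def by (subst degree_prod_linear_factors) auto

lemma lead_coeff_pole_poly: "lead_coeff pole_poly = (\<Prod>i<N. - alpha i)"
  unfolding pole_poly_def lead_coeff_prod by (intro prod.cong) (auto simp: alpha_nonzero)

lemma norm_lead_coeff_pole_poly: "norm (lead_coeff pole_poly) = 1"
  unfolding lead_coeff_pole_poly prod_norm[symmetric] by (simp add: norm_alpha)

lemma coeff_herglotz_term:
  assumes "j < N"
  shows "coeff ([:1, alpha j:] * cofactor_poly j) N = - lead_coeff pole_poly"
proof -
  have "[:1, alpha j:] + [:1, - alpha j:] = [:2:]" by simp
  then have "[:1, alpha j:] * cofactor_poly j + pole_poly = [:2:] * cofactor_poly j"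
    unfolding pole_poly_split[OF assms] distrib_right[symmetric] by (simp only:)
  also have "\<dots> = smult 2 (cofactor_poly j)" by simp
  finally have sum_eq: "[:1, alpha j:] * cofactor_poly j + pole_poly = smult 2 (cofactor_poly j)" .
  have "coeff (smult 2 (cofactor_poly j)) N = 0"
    using assms N_pos by (intro coeff_eq_0) (simp add: degree_cofactor_poly)
  then have "coeff ([:1, alpha j:] * cofactor_poly j) N + coeff pole_poly N = 0"
    by (simp only: coeff_add[symmetric] sum_eq)
  then show ?thesis by (simp add: degree_pole_poly eq_neg_iff_add_eq_0)
qed

lemma degree_herglotz_numer: "degree herglotz_numer \<le> N"
proof -
  have "degree ([:1, alpha j:] * cofactor_poly j) \<le> N" if "j < N" for j
    using that by (intro order.trans[OF degree_mult_le]) (simp add: degree_cofactor_poly)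
  then show ?thesis
    unfolding herglotz_numer_def
    by (intro degree_sum_le) (auto intro: order.trans[OF degree_smult_le])
qed

lemma coeff_blaschke_numer: "coeff blaschke_numer N = 2 * of_real mass * lead_coeff pole_poly"
proof -
  have "coeff herglotz_numer N = (\<Sum>j<N. of_real (lam j) * - lead_coeff pole_poly)"
    unfolding herglotz_numer_def coeff_sum coeff_smult
  proof (intro sum.cong refl)
    fix j assume "j \<in> {..<N}"
    then show "of_real (lam j) * coeff ([:1, alpha j:] * cofactor_poly j) N =
        of_real (lam j) * - lead_coeff pole_poly"
      by (simp only: coeff_herglotz_term lessThan_iff)
  qed
  also have "\<dots> = - (of_real mass * lead_coeff pole_poly)"
    by (simp add: mass_def sum_distrib_right sum_negf)
  finally show ?thesis
    by (simp add: blaschke_numer_def degree_pole_poly)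
qed

lemma degree_blaschke_numer: "degree blaschke_numer = N"
proof (rule antisym)
  show "degree blaschke_numer \<le> N"
    unfolding blaschke_numer_def using degree_herglotz_numer
    by (intro degree_diff_le) (auto intro: order.trans[OF degree_smult_le] simp: degree_pole_poly)
  show "N \<le> degree blaschke_numer"
    using coeff_blaschke_numer norm_lead_coeff_pole_poly mass_pos
    by (intro le_degree) auto
qed

lemma lead_coeff_blaschke_numer: "lead_coeff blaschke_numer = 2 * of_real mass * lead_coeff pole_poly"
  by (simp add: degree_blaschke_numer coeff_blaschke_numer)

lemma poly_cofactor_poly: "poly (cofactor_poly j) z = (\<Prod>i\<in>{..<N} - {j}. 1 - alpha i * z)"
  by (simp add: cofactor_poly_def poly_prod algebra_simps)

lemma poly_pole_poly_factor:
  "poly pole_poly z = lead_coeff pole_poly * (\<Prod>i<N. z - cnj (alpha i))"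
proof -
  have "1 - alpha i * z = - alpha i * (z - cnj (alpha i))" if "i < N" for i
    using alpha_mult_cnj[OF that] by (simp add: algebra_simps)
  then show ?thesis
    by (simp add: poly_pole_poly lead_coeff_pole_poly prod.distrib[symmetric])
qed

lemma pole_poly_reflect:
  assumes "z \<noteq> 0"
  shows "z ^ N * cnj (poly pole_poly (1 / cnj z)) = cnj (lead_coeff pole_poly) * poly pole_poly z"
proof -
  have "z ^ N * cnj (poly pole_poly (1 / cnj z)) =
      cnj (lead_coeff pole_poly) * (z ^ N * cnj (\<Prod>i<N. 1 / cnj z - cnj (alpha i)))"
    unfolding poly_pole_poly_factor complex_cnj_mult by (simp only: mult_ac)
  also have "z ^ N * cnj (\<Prod>i<N. 1 / cnj z - cnj (alpha i)) = poly pole_poly z"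
    using reflect_linear_factors[OF assms, of N "\<lambda>i. cnj (alpha i)"] by (simp add: poly_pole_poly)
  finally show ?thesis .
qed

lemma blaschke_numer_reflect:
  assumes "z \<noteq> 0" "norm z < 1"
  shows "z ^ N * cnj (poly blaschke_numer (1 / cnj z)) =
    cnj (lead_coeff pole_poly) * (poly pole_poly z * (of_real mass + herglotz z))"
proof -
  have "norm (1 / cnj z) \<noteq> 1" using assms by (simp add: norm_divide)
  then have "poly blaschke_numer (1 / cnj z) =
      poly pole_poly (1 / cnj z) * (of_real mass - herglotz (1 / cnj z))"
    by (intro poly_blaschke_numer poly_pole_poly_nonzero)
  then have "z ^ N * cnj (poly blaschke_numer (1 / cnj z)) =
      z ^ N * cnj (poly pole_poly (1 / cnj z)) * (of_real mass + herglotz z)"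
    using cnj_herglotz_reflect[OF assms(1)] by simp
  then show ?thesis by (simp add: pole_poly_reflect[OF assms(1)])
qed

(* The only place where the atoms must be distinct. *)
lemma poly_herglotz_numer_at_pole:
  assumes k: "k < N" and pole: "alpha k * x = 1"
  shows "poly herglotz_numer x \<noteq> 0"
proof -
  have no_other_pole: "alpha i * x \<noteq> 1" if "i < N" "i \<noteq> k" for i
  proof
    assume "alpha i * x = 1"
    with pole have "alpha i = alpha k" by (metis mult_cancel_right mult_zero_right zero_neq_one)
    with inj_alpha that k show False by (auto dest: inj_onD)
  qed
  have vanish: "poly (cofactor_poly j) x = 0" if "j \<in> {..<N} - {k}" for j
    using that k pole by (auto simp: poly_cofactor_poly intro: prod_zero)
  have "poly herglotz_numer x = of_real (lam k) * (1 + alpha k * x) * poly (cofactor_poly k) x"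
    unfolding herglotz_numer_def poly_sum
    using k vanish by (subst sum.remove[of _ k]) (auto intro: sum.neutral simp: algebra_simps)
  moreover have "poly (cofactor_poly k) x \<noteq> 0"
    using no_other_pole by (auto simp: poly_cofactor_poly)
  ultimately show ?thesis using lam_pos[OF k] pole by simp
qed

lemma roots_blaschke_numer_in_disc:
  assumes "poly blaschke_numer x = 0"
  shows "norm x < 1"
proof (rule ccontr)
  assume "\<not> norm x < 1"
  then have x: "1 \<le> norm x" by simp
  show False
  proof (cases "poly pole_poly x = 0")
    case False
    have "0 < Re (of_real mass - herglotz x)"
      using Re_herglotz_nonpos[OF x] mass_pos by simp
    then have "of_real mass - herglotz x \<noteq> 0" by (metis less_irrefl zero_complex.sel(1))
    with False assms show False by (simp add: poly_blaschke_numer)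
  next
    case True
    then obtain k where "k < N" "alpha k * x = 1" by (auto simp: poly_pole_poly)
    then have "poly herglotz_numer x \<noteq> 0" by (rule poly_herglotz_numer_at_pole)
    with True assms show False by (simp add: blaschke_numer_def)
  qed
qed

lemma blaschke_numer_factorization:
  obtains a where "\<And>k. k < N \<Longrightarrow> norm (a k) < 1"
    and "\<And>z. poly blaschke_numer z = lead_coeff blaschke_numer * (\<Prod>k<N. z - a k)"
proof -
  obtain a where
    a: "smult (lead_coeff blaschke_numer) (\<Prod>k<degree blaschke_numer. [:- a k, 1:]) = blaschke_numer"
    by (rule complex_poly_decompose')
  have factor: "poly blaschke_numer z = lead_coeff blaschke_numer * (\<Prod>k<N. z - a k)" for z
    using arg_cong[OF a, of "\<lambda>p. poly p z"] by (simp add: poly_prod degree_blaschke_numer)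
  have roots: "norm (a k) < 1" if "k < N" for k
    using that by (intro roots_blaschke_numer_in_disc) (auto simp: factor intro: prod_zero)
  show ?thesis by (rule that[OF roots factor])
qed

lemma blaschke_denominator:
  assumes factor: "\<And>z. poly blaschke_numer z = lead_coeff blaschke_numer * (\<Prod>k<N. z - a k)"
    and z: "norm z < 1"
  shows "poly pole_poly z * (of_real mass + herglotz z) = 2 * of_real mass * (\<Prod>k<N. 1 - cnj (a k) * z)"
proof (cases "z = 0")
  case True
  then show ?thesis by (simp add: poly_pole_poly)
next
  case False
  have "cnj (lead_coeff pole_poly) * (poly pole_poly z * (of_real mass + herglotz z)) =
      z ^ N * cnj (poly blaschke_numer (1 / cnj z))"
    using blaschke_numer_reflect[OF False z] by simp
  also have "\<dots> = cnj (lead_coeff blaschke_numer) * (z ^ N * cnj (\<Prod>k<N. 1 / cnj z - a k))"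
    unfolding factor complex_cnj_mult by (simp only: mult_ac)
  also have "\<dots> = cnj (lead_coeff pole_poly) * (2 * of_real mass * (\<Prod>k<N. 1 - cnj (a k) * z))"
    unfolding reflect_linear_factors[OF False] lead_coeff_blaschke_numer by simp
  finally show ?thesis
    using norm_lead_coeff_pole_poly by auto
qed

lemma finite_blaschke_cayley_herglotz: "finite_blaschke cayley_herglotz N"
proof -
  obtain a where a: "\<And>k. k < N \<Longrightarrow> norm (a k) < 1"
    and factor: "\<And>z. poly blaschke_numer z = lead_coeff blaschke_numer * (\<Prod>k<N. z - a k)"
    using blaschke_numer_factorization by blast
  show ?thesis unfolding finite_blaschke_def cayley_herglotz_def
  proof (intro exI conjI ballI allI impI)
    show "a k \<in> ball 0 1" if "k < N" for k using a[OF that] by simp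
    fix z :: complex assume "z \<in> ball 0 1"
    then have z: "norm z < 1" by simp
    then have "poly pole_poly z \<noteq> 0" by (intro poly_pole_poly_nonzero) simp
    then have "(of_real mass - herglotz z) / (of_real mass + herglotz z) =
        poly blaschke_numer z / (poly pole_poly z * (of_real mass + herglotz z))"
      by (simp add: poly_blaschke_numer)
    also have "\<dots> = lead_coeff blaschke_numer * (\<Prod>k<N. z - a k) /
        (2 * of_real mass * (\<Prod>k<N. 1 - cnj (a k) * z))"
      unfolding factor blaschke_denominator[OF factor z] ..
    also have "\<dots> = lead_coeff pole_poly * (\<Prod>k<N. (z - a k) / (1 - cnj (a k) * z))"
      using mass_pos by (simp add: lead_coeff_blaschke_numer prod_dividef)
    finally show "(of_real mass - herglotz z) / (of_real mass + herglotz z) =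
        lead_coeff pole_poly * (\<Prod>k<N. (z - a k) / (1 - cnj (a k) * z))" .
  qed (rule norm_lead_coeff_pole_poly)
qed

lemma h_rep_cayley_herglotz:
  assumes "\<And>z. z \<in> ball 0 1 \<Longrightarrow> f z = exp (- herglotz z)"
  shows "h_rep f mass cayley_herglotz"
proof -
  have nonzero: "of_real mass + herglotz z \<noteq> 0" if "z \<in> ball 0 1" for z
    using Re_herglotz_pos[of z] mass_pos that by (auto simp: add_eq_0_iff)
  show ?thesis unfolding h_rep_def
  proof (intro conjI ballI subsetI)
    show "cayley_herglotz holomorphic_on ball 0 1"
      unfolding cayley_herglotz_def[abs_def]
      using nonzero herglotz_holomorphic by (intro holomorphic_intros) auto
    show "w \<in> ball 0 1" if "w \<in> cayley_herglotz ` ball 0 1" for w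
      using that nonzero norm_diff_less_norm_add[OF mass_pos Re_herglotz_pos]
      by (auto simp: cayley_herglotz_def norm_divide divide_less_eq)
    show "f z = exp (of_real mass * (cayley_herglotz z - 1) / (cayley_herglotz z + 1))"
      if "z \<in> ball 0 1" for z
      using assms[OF that] cayley_inverse[OF _ nonzero[OF that]] mass_pos
      by (simp add: cayley_herglotz_def)
  qed (simp add: cayley_herglotz_def)
qed

end

theorem lemma5:
  fixes n N :: nat and f :: "complex \<Rightarrow> complex" and t :: real
  assumes "extremal n f"
    and "f 0 \<in> \<real>" and "Re (f 0) > 0"
    and "1 \<le> N" and "N \<le> n"
    and "has_atoms f N"
    and "t = - ln (Re (f 0))"
  shows "(\<exists>h. h_rep f t h) \<and> (\<forall>h. h_rep f t h \<longrightarrow> finite_blaschke h N)"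
proof -
  obtain lam alpha where atoms: "\<forall>j<N. lam j > 0 \<and> norm (alpha j) = 1" "inj_on alpha {..<N}"
    and f: "\<forall>z\<in>ball 0 1. f z = exp (- (\<Sum>j<N. of_real (lam j) * (1 + alpha j * z) / (1 - alpha j * z)))"
    using \<open>has_atoms f N\<close> unfolding has_atoms_def by blast
  interpret finite_atoms N lam alpha
    using atoms \<open>1 \<le> N\<close> by unfold_locales auto
  have f_herglotz: "f z = exp (- herglotz z)" if "z \<in> ball 0 1" for z
    using f that unfolding herglotz_def by blast
  have "f 0 = exp (- of_real mass)"
    using f_herglotz[of 0] by simp
  then have "Re (f 0) = exp (- mass)"
    by (metis Re_complex_of_real exp_of_real of_real_minus)
  then have t: "t = mass"
    using \<open>t = - ln (Re (f 0))\<close> by simp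
  have rep: "h_rep f t cayley_herglotz"
    unfolding t by (rule h_rep_cayley_herglotz[OF f_herglotz])
  have "finite_blaschke h N" if "h_rep f t h" for h
  proof (rule finite_blaschke_cong[OF finite_blaschke_cayley_herglotz])
    show "h z = cayley_herglotz z" if "z \<in> ball 0 1" for z
      using h_rep_unique[OF \<open>h_rep f t h\<close> rep _ that] mass_pos t by simp
  qed
  with rep show ?thesis by blast
qed

end
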